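(* For each integer $n\ge0$ let $\theta^\Delta_n(x)=\sum_{k=0}^n\frac{(n+k)!}{2^k(n-k)!\,k!}(x)_{n-k}$, where $(x)_j=x(x-1)\cdots(x-j+1)$ and $(x)_0=1$. Then for every $n\ge0$ and every $x\in\mathbb{C}$, \[ \theta^\Delta_{n+2}(x)-(2n+3)\theta^\Delta_{n+1}(x)-x(x-1)\theta^\Delta_n(x-2)=0 . \] *)

theory Defs
  imports Complex_Main
begin

definition falling_fact :: "complex \<Rightarrow> nat \<Rightarrow> complex" where
  "falling_fact x j = (\<Prod>i<j. x - of_nat i)"

definition theta_Delta :: "nat \<Rightarrow> complex \<Rightarrow> complex" where
  "theta_Delta n x = (\<Sum>k=0..n. of_nat (fact (n + k)) / (2 ^ k * of_nat (fact (n - k)) * of_nat (fact k))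
                        * falling_fact x (n - k))"

end

theory Submission
  imports Defs
begin

(* With a = theta_coeff, theta_Delta n x = (SUM k. a n k * (x)_(n-k)). Since
   x (x - 1) (x - 2)_j = (x)_(j+2), the term x (x - 1) theta_Delta n (x - 2) has the same
   coefficients a n k, now on (x)_(n+2-k). Comparing coefficients, the identity reduces to
   a (n+2) 0 = a n 0 = 1 and the recurrence a (n+2) (k+1) = (2n+3) a (n+1) k + a n (k+1), which
   after division by a (n+1) k is the polynomial identity
   (n+k+3)(n+k+2) = 2(k+1)(2n+3) + (n+1-k)(n-k). *)

lemma falling_fact_add: "falling_fact x (m + j) = falling_fact x m * falling_fact (x - of_nat m) j"
  by (induction j) (simp_all add: falling_fact_def algebra_simps)

lemma falling_fact_2: "falling_fact x 2 = x * (x - 1)"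
  by (simp add: falling_fact_def numeral_2_eq_2 lessThan_Suc)

definition theta_coeff :: "nat \<Rightarrow> nat \<Rightarrow> 'a :: field_char_0" where
  "theta_coeff n k = (if k \<le> n then fact (n + k) / (2 ^ k * fact (n - k) * fact k) else 0)"

lemma theta_coeff_0 [simp]: "theta_coeff n 0 = 1"
  by (simp add: theta_coeff_def)

lemma theta_coeff_eq: "k \<le> n \<Longrightarrow> theta_coeff n k = fact (n + k) / (2 ^ k * fact (n - k) * fact k)"
  by (simp add: theta_coeff_def)

lemma theta_coeff_add_2_Suc:
  "2 * of_nat (Suc k) * theta_coeff (n + 2) (Suc k)
     = of_nat (n + k + 3) * of_nat (n + k + 2) * theta_coeff (n + 1) k"
proof (cases "k \<le> n + 1")
  case True
  have num: "fact (n + 2 + Suc k) = of_nat (n + k + 3) * of_nat (n + k + 2) * (fact (n + 1 + k) :: 'a)"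
    by (simp add: numeral_3_eq_3 numeral_2_eq_2 algebra_simps)
  have den: "2 ^ Suc k * fact (n + 2 - Suc k) * fact (Suc k)
      = 2 * of_nat (Suc k) * (2 ^ k * fact (n + 1 - k) * (fact k :: 'a))"
    by (simp del: of_nat_Suc)
  show ?thesis
    using True by (simp only: theta_coeff_eq num den) (simp del: of_nat_Suc)
qed (simp add: theta_coeff_def)

(* Truncated subtraction is harmless here: for k \<ge> n both sides vanish. *)
lemma theta_coeff_Suc:
  "2 * of_nat (Suc k) * theta_coeff n (Suc k)
     = of_nat (n + 1 - k) * of_nat (n - k) * theta_coeff (n + 1) k"
proof (cases "Suc k \<le> n")
  case True
  have num: "fact (n + Suc k) = (fact (n + 1 + k) :: 'a)"
    by simp
  have den: "2 ^ k * fact (n + 1 - k) * fact k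
      = of_nat (n + 1 - k) * of_nat (n - k) * (2 ^ k * fact (n - Suc k) * (fact k :: 'a))"
    using True by (simp add: fact_reduce Suc_diff_le del: of_nat_diff)
  have "(of_nat (n + 1 - k) :: 'a) \<noteq> 0" "(of_nat (n - k) :: 'a) \<noteq> 0"
    using True by (simp_all del: of_nat_diff)
  then show ?thesis
    using True by (simp only: theta_coeff_eq num den) (simp del: of_nat_Suc of_nat_diff)
qed (simp add: theta_coeff_def)

lemma theta_coeff_recurrence:
  "theta_coeff (n + 2) (Suc k) = (2 * of_nat n + 3) * theta_coeff (n + 1) k + theta_coeff n (Suc k)"
proof (cases "k \<le> n + 1")
  case True
  then obtain d where d: "n + 1 = k + d" using le_Suc_ex by blast
  have "(n + k + 3) * (n + k + 2) = 2 * Suc k * (2 * n + 3) + (n + 1 - k) * (n - k)"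
    using d by (cases d) (auto simp: algebra_simps)
  then have "(of_nat (n + k + 3) * of_nat (n + k + 2) :: 'a)
      = 2 * of_nat (Suc k) * (2 * of_nat n + 3) + of_nat (n + 1 - k) * of_nat (n - k)"
    by (metis (mono_tags, lifting) of_nat_add of_nat_mult of_nat_numeral)
  then have "2 * of_nat (Suc k) * theta_coeff (n + 2) (Suc k)
      = (2 * of_nat (Suc k) * (2 * of_nat n + 3) + of_nat (n + 1 - k) * of_nat (n - k))
          * (theta_coeff (n + 1) k :: 'a)"
    by (simp only: theta_coeff_add_2_Suc)
  also have "\<dots> = 2 * of_nat (Suc k) * ((2 * of_nat n + 3) * theta_coeff (n + 1) k + theta_coeff n (Suc k))"
    unfolding distrib_right theta_coeff_Suc[symmetric] by (simp add: algebra_simps)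
  finally show ?thesis
    by (simp del: of_nat_Suc)
qed (simp add: theta_coeff_def)

lemma theta_Delta_eq_sum:
  assumes "n \<le> N"
  shows "theta_Delta n x = (\<Sum>k\<le>N. theta_coeff n k * falling_fact x (n - k))"
proof -
  have "theta_Delta n x = (\<Sum>k\<le>n. theta_coeff n k * falling_fact x (n - k))"
    unfolding theta_Delta_def atLeast0AtMost by (rule sum.cong) (simp_all add: theta_coeff_eq)
  also have "\<dots> = (\<Sum>k\<le>N. theta_coeff n k * falling_fact x (n - k))"
    using assms by (intro sum.mono_neutral_left) (auto simp: theta_coeff_def)
  finally show ?thesis .
qed

lemma theta_Delta_minus_2:
  "x * (x - 1) * theta_Delta n (x - 2) = (\<Sum>k\<le>n + 2. theta_coeff n k * falling_fact x (n + 2 - k))"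
proof -
  have shift: "x * (x - 1) * falling_fact (x - 2) (n - k) = falling_fact x (n + 2 - k)"
    if "k \<le> n" for k
  proof -
    from that have "n + 2 - k = 2 + (n - k)" by simp
    then show ?thesis by (simp only: falling_fact_add falling_fact_2 of_nat_numeral)
  qed
  have "x * (x - 1) * theta_Delta n (x - 2)
      = (\<Sum>k\<le>n + 2. theta_coeff n k * (x * (x - 1) * falling_fact (x - 2) (n - k)))"
    by (subst theta_Delta_eq_sum[of n "n + 2"]) (simp_all only: le_add1 sum_distrib_left mult_ac)
  also have "\<dots> = (\<Sum>k\<le>n + 2. theta_coeff n k * falling_fact x (n + 2 - k))"
    by (rule sum.cong) (simp_all add: shift theta_coeff_def)
  finally show ?thesis .
qed

theorem mainTheorem13:
  fixes n :: nat and x :: complex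
  shows "theta_Delta (n + 2) x - (2 * of_nat n + 3) * theta_Delta (n + 1) x
           - x * (x - 1) * theta_Delta n (x - 2) = 0"
proof -
  have top: "theta_Delta (n + 2) x
      = falling_fact x (n + 2) + (\<Sum>k\<le>n + 1. theta_coeff (n + 2) (Suc k) * falling_fact x (n + 1 - k))"
    by (subst theta_Delta_eq_sum[of _ "Suc (n + 1)"]) (simp_all add: sum.atMost_Suc_shift del: sum.atMost_Suc)
  have middle: "theta_Delta (n + 1) x = (\<Sum>k\<le>n + 1. theta_coeff (n + 1) k * falling_fact x (n + 1 - k))"
    by (rule theta_Delta_eq_sum) simp
  have bottom: "x * (x - 1) * theta_Delta n (x - 2)
      = falling_fact x (n + 2) + (\<Sum>k\<le>n + 1. theta_coeff n (Suc k) * falling_fact x (n + 1 - k))"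
    by (subst theta_Delta_minus_2) (simp add: sum.atMost_Suc_shift del: sum.atMost_Suc)
  have "(\<Sum>k\<le>n + 1. theta_coeff (n + 2) (Suc k) * falling_fact x (n + 1 - k))
      = (2 * of_nat n + 3) * theta_Delta (n + 1) x
        + (\<Sum>k\<le>n + 1. theta_coeff n (Suc k) * falling_fact x (n + 1 - k))"
    unfolding middle theta_coeff_recurrence
    by (simp only: distrib_right sum.distrib sum_distrib_left mult.assoc)
  then show ?thesis
    unfolding top bottom by simp
qed

end
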